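(* Suppose $B:\mathcal{F}\otimes\mathcal{F}\to\mathbb{Z}$ is a bilinear form such that: (1) if $w_0\in\mathcal{M}_{n_0}^{e_0}$, $w_1\in\mathcal{M}_{n_1}^{e_1}$ with $(n_0,e_0)\ne(n_1,e_1)$ then $B(w_0,w_1)=0$; (2) for all words $w_0,w_1$: $B(a_{x,i}w_0,w_1)=B(w_0,a^*_{x,i}w_1)$ for $0\le i\le n_x(w_0)$, and $B(w_0,a_{y,i}w_1)=B(a^*_{y,i}w_0,w_1)$ for $0\le i\le n_y(w_1)$ (with $B(0,\cdot)=B(\cdot,0)=0$ when a terminal annihilation gives $0$); (3) $B(1,1)=1$. Then $B=\langle\cdot|\cdot\rangle$.
   Context: $\mathcal{M}$ is the free monoid of words in $x,y$ (empty word $1$), $\mathcal{F}$ its $\mathbb{Z}$-span; $\mathcal{M}_n^e$ is the set of words with $n_x$ $x$'s and $n_y$ $y$'s where $n=n_x+n_y$, $e=n_y-n_x$; $n_s(w)$ is the number of letters $s$ in $w$. Operators on a word $w$ (extended linearly): $a_{s,0}w$ deletes the initial letter if it is $s$, else $0$; $a_{s,i}w$ ($1\le i\le n_s(w)$) deletes the $i$-th $s$; $a_{s,n_s+1}w$ deletes the final letter if it is $s$, else $0$; $a^*_{s,0}w$ prepends $s$; $a^*_{s,i}w$ ($1\le i\le n_s(w)$) replaces the $i$-th $s$ by $ss$; $a^*_{s,n_s+1}w$ appends $s$. $\langle w_0|w_1\rangle=1$ if $w_0,w_1$ have the same degrees and for each $i$ the $i$-th $x$ of $w_0$ is at a position $\le$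 that of the $i$-th $x$ of $w_1$; otherwise $0$; extended bilinearly. *)

theory Defs
  imports Main
begin

text \<open>Letters of the alphabet; words (elements of the free monoid M) are lists of letters,
  the empty list being the empty word 1. A bilinear form on the Z-span F of M is determined
  by (and identified with) its values on pairs of basis words: B :: word => word => int.\<close>

datatype letter = X | Y

type_synonym word = "letter list"

definition ns :: "letter \<Rightarrow> word \<Rightarrow> nat" where
  "ns s w = count_list w s"

definition deg_n :: "word \<Rightarrow> nat" where "deg_n w = ns X w + ns Y w"
definition deg_e :: "word \<Rightarrow> int" where "deg_e w = int (ns Y w) - int (ns X w)"

definition spos :: "letter \<Rightarrow> word \<Rightarrow> nat list" where
  "spos s w = filter (\<lambda>j. w ! j = s) [0..<length w]"

text \<open>Annihilation operator a_{s,i}; result None stands for the zero vector.\<close>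
definition ann :: "letter \<Rightarrow> nat \<Rightarrow> word \<Rightarrow> word option" where
  "ann s i w =
    (if i = 0 then (if w \<noteq> [] \<and> hd w = s then Some (tl w) else None)
     else if i \<le> ns s w then
       (let p = spos s w ! (i - 1) in Some (take p w @ drop (Suc p) w))
     else if i = ns s w + 1 then (if w \<noteq> [] \<and> last w = s then Some (butlast w) else None)
     else None)"

definition cre :: "letter \<Rightarrow> nat \<Rightarrow> word \<Rightarrow> word option" where
  "cre s i w =
    (if i = 0 then Some (s # w)
     else if i \<le> ns s w then
       (let p = spos s w ! (i - 1) in Some (take p w @ s # drop p w))
     else if i = ns s w + 1 then Some (w @ [s])
     else None)"

text \<open>Bilinear extension to arguments that may be zero (None).\<close>
definition liftB :: "(word \<Rightarrow> word \<Rightarrow> int) \<Rightarrow> word option \<Rightarrow> word option \<Rightarrow> int" where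
  "liftB B u v = (case (u, v) of (Some a, Some b) \<Rightarrow> B a b | _ \<Rightarrow> 0)"

definition pairing :: "word \<Rightarrow> word \<Rightarrow> int" where
  "pairing w0 w1 =
    (if ns X w0 = ns X w1 \<and> ns Y w0 = ns Y w1 \<and>
        list_all2 (\<le>) (spos X w0) (spos X w1) then 1 else 0)"

end

theory Submission
  imports Defs
begin

text \<open>Both \<open>B\<close> and the pairing vanish between words with different letter counts, so take
equal counts and induct on the total length. If the right word ends in x, adjointness of the
annihilator of the last x of the left word strips both of these x's, and dually if the left word
ends in y; the pairing obeys the same recursion. What remains is a left word ending in x against a
right word ending in y, where the pairing is 0. There \<open>B\<close> vanishes by a separate induction:
equal leading letters are removed by \<open>a\<^sub>x\<^sub>,\<^sub>0\<close> and \<open>a\<^sub>y\<^sub>,\<^sub>0\<close>, a factor xx of the right word (yy of the left)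
is shortened by a creation operator in the middle, and if none of this applies, the left word starts
and ends with x and contains no yy, so it has more x's than y's, while the right word has more y's
than x's.\<close>

lemma ns_Nil [simp]: "ns s [] = 0"
  by (simp add: ns_def)

lemma ns_Cons [simp]: "ns s (c # w) = (if c = s then Suc (ns s w) else ns s w)"
  by (simp add: ns_def)

lemma ns_append [simp]: "ns s (u @ v) = ns s u + ns s v"
  by (simp add: ns_def)

lemma ns_eq_0_iff: "ns s w = 0 \<longleftrightarrow> s \<notin> set w"
  by (simp add: ns_def count_list_0_iff)

lemma length_eq_ns_X_plus_ns_Y: "length w = ns X w + ns Y w"
  by (induction w) (auto intro: letter.exhaust)

lemma split_at_occurrence:
  assumes "i < ns s w"
  obtains a b where "w = a @ s # b" "ns s a = i"
  using assms
proof (induction w arbitrary: i thesis)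
  case Nil
  then show ?case by simp
next
  case (Cons c w)
  show ?case
  proof (cases "c = s \<and> i = 0")
    case True
    then show ?thesis using Cons.prems(1)[of "[]" w] by simp
  next
    case False
    then obtain j where j: "j < ns s w" "i = (if c = s then Suc j else j)"
      using Cons.prems(2) by (cases i) (auto split: if_splits)
    obtain a b where "w = a @ s # b" "ns s a = j"
      using Cons.IH[OF _ j(1)] by blast
    then show ?thesis using Cons.prems(1)[of "c # a" b] j(2) by simp
  qed
qed

lemma ns_le_ns_of_no_double:
  assumes "s \<noteq> t"
    and "\<And>a b. w \<noteq> a @ s # s # b" and "\<And>a. w \<noteq> a @ [s]"
  shows "ns s w \<le> ns t w"
  using assms(2,3)
proof (induction w rule: induct_list012)
  case (3 c d w)
  have other: "e \<noteq> s \<Longrightarrow> e = t" for e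
    using \<open>s \<noteq> t\<close> by (cases e; cases s; cases t) auto
  show ?case
  proof (cases "c = s")
    case True
    then have "d = t" using other "3.prems"(1)[of "[]" w] by auto
    moreover have "ns s w \<le> ns t w"
      by (rule "3.IH"(1)) (use "3.prems" in \<open>metis append_Cons\<close>)+
    ultimately show ?thesis using True \<open>s \<noteq> t\<close> by simp
  next
    case False
    moreover have "ns s (d # w) \<le> ns t (d # w)"
      by (rule "3.IH"(2)) (use "3.prems" in \<open>metis append_Cons\<close>)+
    ultimately show ?thesis using other by simp
  qed
qed (use assms(1) in \<open>auto simp: append_eq_Cons_conv\<close>)

lemma spos_append: "spos s (u @ v) = spos s u @ map (\<lambda>j. j + length u) (spos s v)"
proof -
  have "[0..<length u + length v] = [0..<length u] @ map (\<lambda>j. j + length u) [0..<length v]"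
    by (simp only: map_add_upt upt_add_eq_append[OF le0] add.commute)
  moreover have "filter (\<lambda>j. (u @ v) ! j = s) [0..<length u] = filter (\<lambda>j. u ! j = s) [0..<length u]"
    by (rule filter_cong) (auto simp: nth_append)
  ultimately show ?thesis
    unfolding spos_def by (simp add: filter_map comp_def nth_append)
qed

lemma spos_Nil [simp]: "spos s [] = []"
  by (simp add: spos_def)

lemma spos_Cons: "spos s (c # w) = (if c = s then 0 # map Suc (spos s w) else map Suc (spos s w))"
  using spos_append[of s "[c]" w] by (simp add: spos_def)

lemma spos_snoc: "spos s (w @ [c]) = (if c = s then spos s w @ [length w] else spos s w)"
  by (simp add: spos_append spos_Cons)

lemma length_spos: "length (spos s w) = ns s w"
  by (induction w) (simp_all add: spos_Cons)

lemma spos_less_length: "j \<in> set (spos s w) \<Longrightarrow> j < length w"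
  by (simp add: spos_def)

lemma sorted_wrt_spos: "sorted_wrt (<) (spos s w)"
  unfolding spos_def by (simp add: sorted_wrt_filter)

lemma spos_eq_Nil: "s \<notin> set w \<Longrightarrow> spos s w = []"
  by (metis length_0_conv length_spos ns_eq_0_iff)

lemma spos_of_set_subset: "set w \<subseteq> {s} \<Longrightarrow> spos s w = [0..<length w]"
  unfolding spos_def by (rule filter_True) (auto simp: subset_iff)

lemma spos_nth_occurrence: "spos s (a @ s # b) ! ns s a = length a"
  by (simp add: spos_append spos_Cons nth_append length_spos)

lemma ann_0_Cons: "ann s 0 (c # w) = (if c = s then Some w else None)"
  by (simp add: ann_def)

lemma cre_0: "cre s 0 w = Some (s # w)"
  by (simp add: cre_def)

lemma ann_occurrence: "ann s (Suc (ns s a)) (a @ s # b) = Some (a @ b)"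
  using spos_nth_occurrence[of s a b] by (simp add: ann_def Let_def)

lemma cre_occurrence: "cre s (Suc (ns s a)) (a @ s # b) = Some (a @ s # s # b)"
  using spos_nth_occurrence[of s a b] by (simp add: cre_def Let_def)

lemma cre_snoc: "cre s (Suc (ns s w)) w = Some (w @ [s])"
  by (simp add: cre_def)

lemma liftB_simps [simp]:
  "liftB B (Some u) (Some v) = B u v" "liftB B None v' = 0" "liftB B u' None = 0"
  by (auto simp: liftB_def split: option.splits)

lemma pairing_Nil_Nil: "pairing [] [] = 1"
  by (simp add: pairing_def)

lemma pairing_remove_last_X:
  assumes "X \<notin> set b" "length (a @ X # b) = length (v @ [X])"
  shows "pairing (a @ X # b) (v @ [X]) = pairing (a @ b) v"
proof -
  have "spos X (a @ X # b) = spos X a @ [length a]" "spos X (a @ b) = spos X a"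
    using spos_eq_Nil[OF assms(1)] by (simp_all add: spos_append spos_Cons)
  moreover have "length a \<le> length v"
    using assms(2) by simp
  then have "list_all2 (\<le>) (spos X a @ [length a]) (spos X v @ [length v])
      \<longleftrightarrow> list_all2 (\<le>) (spos X a) (spos X v)"
    by (cases "length (spos X a) = length (spos X v)")
      (auto simp: list_all2_append dest: list_all2_lengthD)
  ultimately show ?thesis
    unfolding pairing_def spos_snoc using assms(1) by (simp add: ns_eq_0_iff[symmetric])
qed

lemma sorted_wrt_less_nth_bound:
  fixes xs :: "nat list"
  assumes "sorted_wrt (<) xs" "\<forall>x\<in>set xs. x < L" "j < length xs"
  shows "xs ! j + (length xs - j) \<le> L"
  using assms
proof (induction xs arbitrary: j)
  case (Cons x xs)
  show ?case
  proof (cases j)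
    case 0
    then show ?thesis
      using Cons.IH[of 0] Cons.prems by (cases xs) fastforce+
  next
    case (Suc k)
    then show ?thesis using Cons.IH[of k] Cons.prems by simp
  qed
qed simp

lemma pairing_remove_last_Y:
  assumes "Y \<notin> set b" "length (u @ [Y]) = length (a @ Y # b)"
  shows "pairing (u @ [Y]) (a @ Y # b) = pairing u (a @ b)"
proof (cases "ns X u = ns X (a @ b)")
  case False
  then show ?thesis by (simp add: pairing_def)
next
  case True
  have "set b \<subseteq> {X}"
    using assms(1) by (auto intro: letter.exhaust)
  then have spos_b: "spos X b = [0..<length b]"
    by (rule spos_of_set_subset)
  define su where "su = spos X u"
  define m where "m = length (spos X a)"
  have len_su: "length su = m + length b"
    using True spos_b length_spos[of X b] unfolding su_def m_def by (simp add: length_spos)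
  have len_u: "length u = length a + length b"
    using assms(2) by simp
  \<comment> \<open>the last \<open>length b\<close> x-positions of \<open>u\<close> are strictly increasing and below \<open>length u\<close>, so they never obstruct\<close>
  have tail: "list_all2 (\<le>) (drop m su) (map (\<lambda>j. j + c) [0..<length b])"
    if "c \<ge> length a" for c
  proof -
    have "drop m su ! j \<le> j + length a" if "j < length b" for j
    proof -
      have "su ! (m + j) + (length su - (m + j)) \<le> length u"
        by (rule sorted_wrt_less_nth_bound)
          (use sorted_wrt_spos spos_less_length that len_su in \<open>auto simp: su_def\<close>)
      then show ?thesis using len_su len_u that by simp
    qed
    then show ?thesis using len_su \<open>c \<ge> length a\<close> by (fastforce simp: list_all2_conv_all_nth)
  qed
  have split: "list_all2 (\<le>) su (spos X a @ map (\<lambda>j. j + c) [0..<length b])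
      \<longleftrightarrow> list_all2 (\<le>) (take m su) (spos X a)" if "c \<ge> length a" for c
    using list_all2_append[of "take m su" "spos X a" "(\<le>)" "drop m su"] tail[OF that] len_su
    by (simp add: m_def)
  have "spos X (a @ Y # b) = spos X a @ map (\<lambda>j. j + (length a + 1)) [0..<length b]"
    "spos X (a @ b) = spos X a @ map (\<lambda>j. j + length a) [0..<length b]"
    by (simp_all add: spos_append spos_Cons spos_b comp_def add.assoc)
  then show ?thesis
    unfolding pairing_def spos_snoc using split[of "length a"] split[of "length a + 1"]
    by (simp add: su_def)
qed

lemma pairing_last_X_last_Y:
  assumes "w0 \<noteq> []" "last w0 = X" "w1 \<noteq> []" "last w1 = Y"
  shows "pairing w0 w1 = 0"
proof -
  obtain u where u: "w0 = u @ [X]"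
    using assms(1,2) by (metis append_butlast_last_id)
  obtain v where v: "w1 = v @ [Y]"
    using assms(3,4) by (metis append_butlast_last_id)
  \<comment> \<open>the last x of \<open>w0\<close> sits at the final position, which is not an x-position of \<open>w1\<close>\<close>
  have "\<not> list_all2 (\<le>) (spos X u @ [length u]) (spos X v)" if "length u = length v"
  proof
    assume le: "list_all2 (\<le>) (spos X u @ [length u]) (spos X v)"
    then have "spos X v \<noteq> []"
      by (auto dest: list_all2_lengthD)
    then obtain ps p where ps: "spos X v = ps @ [p]"
      by (metis append_butlast_last_id)
    then have "p < length v"
      using spos_less_length[of p X v] by simp
    moreover have "length u \<le> p"
      using le ps list_all2_lengthD[OF le] by (simp add: list_all2_append)
    ultimately show False using that by simp
  qed
  moreover have "length u = length v" if "ns X w0 = ns X w1" "ns Y w0 = ns Y w1"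
    using that length_eq_ns_X_plus_ns_Y[of u] length_eq_ns_X_plus_ns_Y[of v] u v by simp
  ultimately show ?thesis
    unfolding pairing_def u v spos_snoc by auto
qed


locale graded_adjoint_form =
  fixes B :: "word \<Rightarrow> word \<Rightarrow> int"
  assumes grading: "\<And>w0 w1. (deg_n w0, deg_e w0) \<noteq> (deg_n w1, deg_e w1) \<Longrightarrow> B w0 w1 = 0"
    and adj_x: "\<And>w0 w1 i. i \<le> ns X w0 \<Longrightarrow>
                 liftB B (ann X i w0) (Some w1) = liftB B (Some w0) (cre X i w1)"
    and adj_y: "\<And>w0 w1 i. i \<le> ns Y w1 \<Longrightarrow>
                 liftB B (Some w0) (ann Y i w1) = liftB B (cre Y i w0) (Some w1)"
    and norm: "B [] [] = 1"
begin

lemma B_eq_0_of_ns_ne: "ns X w0 \<noteq> ns X w1 \<or> ns Y w0 \<noteq> ns Y w1 \<Longrightarrow> B w0 w1 = 0"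
  by (rule grading) (auto simp: deg_n_def deg_e_def)

lemma B_X_Cons_X_Cons: "B (X # u) (X # v) = B u v"
  using adj_x[of 0 "X # u" v] by (simp add: ann_0_Cons cre_0)

lemma B_Y_Cons_X_Cons: "B (Y # u) (X # v) = 0"
  using adj_x[of 0 "Y # u" v] by (simp add: ann_0_Cons cre_0)

lemma B_Y_Cons_Y_Cons: "B (Y # u) (Y # v) = B u v"
  using adj_y[of 0 "Y # v" u] by (simp add: ann_0_Cons cre_0)

lemma B_ann_X_occurrence:
  "cre X (Suc (ns X a)) w1 = Some w1' \<Longrightarrow> B (a @ X # b) w1' = B (a @ b) w1"
  using adj_x[of "Suc (ns X a)" "a @ X # b" w1] by (simp add: ann_occurrence)

lemma B_ann_Y_occurrence:
  "cre Y (Suc (ns Y a)) w0 = Some w0' \<Longrightarrow> B w0' (a @ Y # b) = B w0 (a @ b)"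
  using adj_y[of "Suc (ns Y a)" "a @ Y # b" w0] by (simp add: ann_occurrence)

lemma B_last_X_last_Y:
  assumes "w0 \<noteq> []" "last w0 = X" "w1 \<noteq> []" "last w1 = Y"
  shows "B w0 w1 = 0"
  using assms
proof (induction "length w0 + length w1" arbitrary: w0 w1 rule: less_induct)
  case less
  note IH = less.hyps and ends = less.prems
  consider "ns X w0 \<noteq> ns X w1 \<or> ns Y w0 \<noteq> ns Y w1"
    | (XX) a b where "w1 = a @ X # X # b"
    | (YY) a b where "w0 = a @ Y # Y # b"
    | (same) "ns X w0 = ns X w1" "ns Y w0 = ns Y w1"
        "\<And>a b. w1 \<noteq> a @ X # X # b" "\<And>a b. w0 \<noteq> a @ Y # Y # b"
    by blast
  then show ?case
  proof cases
    case 1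
    then show ?thesis by (rule B_eq_0_of_ns_ne)
  next
    case XX
    \<comment> \<open>shorten xx to x, annihilating the matching x of \<open>w0\<close>\<close>
    show ?thesis
    proof (cases "ns X w0 = ns X w1")
      case True
      then obtain a0 b0 where w0: "w0 = a0 @ X # b0" "ns X a0 = ns X a"
        using XX split_at_occurrence[of "ns X a" X w0] by auto
      then have "b0 \<noteq> []"
        using True XX by auto
      moreover have "b \<noteq> []"
        using ends XX by auto
      ultimately have "B (a0 @ b0) (a @ X # b) = 0"
        using IH ends XX w0 by simp
      then show ?thesis
        using B_ann_X_occurrence[of a0 "a @ X # b"] cre_occurrence[of X a b] w0 XX by simp
    qed (rule B_eq_0_of_ns_ne, simp)
  next
    case YY
    show ?thesis
    proof (cases "ns Y w0 = ns Y w1")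
      case True
      then obtain a1 b1 where w1: "w1 = a1 @ Y # b1" "ns Y a1 = ns Y a"
        using YY split_at_occurrence[of "ns Y a" Y w1] by auto
      then have "b1 \<noteq> []"
        using True YY by auto
      moreover have "b \<noteq> []"
        using ends YY by auto
      ultimately have "B (a @ Y # b) (a1 @ b1) = 0"
        using IH ends YY w1 by simp
      then show ?thesis
        using B_ann_Y_occurrence[of a1 "a @ Y # b"] cre_occurrence[of Y a b] w1 YY by simp
    qed (rule B_eq_0_of_ns_ne, simp)
  next
    case same
    have "length w0 = length w1"
      using same(1,2) length_eq_ns_X_plus_ns_Y[of w0] length_eq_ns_X_plus_ns_Y[of w1] by simp
    obtain c0 u c1 v where w: "w0 = c0 # u" "w1 = c1 # v"
      using ends by (meson list.exhaust)
    show ?thesis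
    proof (cases c0; cases c1)
      assume "c0 = X" "c1 = X"
      then have "v \<noteq> []" "u \<noteq> []"
        using ends w \<open>length w0 = length w1\<close> by auto
      then show ?thesis
        using IH[of u v] ends w \<open>c0 = X\<close> \<open>c1 = X\<close> by (simp add: B_X_Cons_X_Cons)
    next
      assume "c0 = Y" "c1 = Y"
      then have "u \<noteq> []" "v \<noteq> []"
        using ends w \<open>length w0 = length w1\<close> by auto
      then show ?thesis
        using IH[of u v] ends w \<open>c0 = Y\<close> \<open>c1 = Y\<close> by (simp add: B_Y_Cons_Y_Cons)
    next
      assume "c0 = Y" "c1 = X"
      then show ?thesis using w by (simp add: B_Y_Cons_X_Cons)
    next
      \<comment> \<open>impossible: \<open>w0\<close> has more x's than y's, \<open>w1\<close> more y's than x's\<close>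
      assume "c0 = X" "c1 = Y"
      have "ns Y u \<le> ns X u"
      proof (rule ns_le_ns_of_no_double)
        show "u \<noteq> a @ Y # Y # b" for a b
          using same(4)[of "X # a" b] w \<open>c0 = X\<close> by auto
        show "u \<noteq> a @ [Y]" for a
          using ends w by auto
      qed simp
      moreover have "ns X v \<le> ns Y v"
      proof (rule ns_le_ns_of_no_double)
        show "v \<noteq> a @ X # X # b" for a b
          using same(3)[of "Y # a" b] w \<open>c1 = Y\<close> by auto
        show "v \<noteq> a @ [X]" for a
          using ends w by auto
      qed simp
      ultimately show ?thesis
        using same(1,2) w \<open>c0 = X\<close> \<open>c1 = Y\<close> by simp
    qed
  qed
qed

lemma B_eq_pairing: "B w0 w1 = pairing w0 w1"
proof (induction "length w0 + length w1" arbitrary: w0 w1 rule: less_induct)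
  case less
  show ?case
  proof (cases "ns X w0 = ns X w1 \<and> ns Y w0 = ns Y w1")
    case False
    then show ?thesis
      using B_eq_0_of_ns_ne by (auto simp: pairing_def)
  next
    case True
    then have len: "length w0 = length w1"
      using length_eq_ns_X_plus_ns_Y[of w0] length_eq_ns_X_plus_ns_Y[of w1] by simp
    consider (Nil) "w0 = []" | (last_X) v where "w1 = v @ [X]" | (last_Y) u where "w0 = u @ [Y]"
      | (last_X_last_Y) "w0 \<noteq> []" "last w0 = X" "w1 \<noteq> []" "last w1 = Y"
    proof (cases "w0 = []")
      case False
      then have "w1 \<noteq> []"
        using len by auto
      then have "w0 = butlast w0 @ [last w0]" "w1 = butlast w1 @ [last w1]"
        using False by simp_all
      then show ?thesis
        using False \<open>w1 \<noteq> []\<close> that(2-4) by (cases "last w0"; cases "last w1") metis+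
    qed (rule that(1))
    then show ?thesis
    proof cases
      case Nil
      then show ?thesis
        using len norm pairing_Nil_Nil by simp
    next
      case last_X
      then have "X \<in> set w0"
        using True ns_eq_0_iff[of X w0] by simp
      then obtain a b where w0: "w0 = a @ X # b" "X \<notin> set b"
        by (meson split_list_last)
      then have "ns X v = ns X a"
        using True last_X by (simp add: ns_eq_0_iff[symmetric])
      then have "B w0 w1 = B (a @ b) v"
        using B_ann_X_occurrence[of a v w1 b] cre_snoc[of X v] w0 last_X by simp
      also have "\<dots> = pairing (a @ b) v"
        by (rule less) (simp add: w0 last_X)
      also have "\<dots> = pairing w0 w1"
        using pairing_remove_last_X[of b a v] w0 last_X len by simp
      finally show ?thesis .
    next
      case last_Y
      then have "Y \<in> set w1"
        using True ns_eq_0_iff[of Y w1] by simp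
      then obtain a b where w1: "w1 = a @ Y # b" "Y \<notin> set b"
        by (meson split_list_last)
      then have "ns Y u = ns Y a"
        using True last_Y by (simp add: ns_eq_0_iff[symmetric])
      then have "B w0 w1 = B u (a @ b)"
        using B_ann_Y_occurrence[of a u w0 b] cre_snoc[of Y u] w1 last_Y by simp
      also have "\<dots> = pairing u (a @ b)"
        by (rule less) (simp add: w1 last_Y)
      also have "\<dots> = pairing w0 w1"
        using pairing_remove_last_Y[of b u a] w1 last_Y len by simp
      finally show ?thesis .
    next
      case last_X_last_Y
      then show ?thesis
        using B_last_X_last_Y pairing_last_X_last_Y by simp
    qed
  qed
qed

end

theorem mainTheorem7:
  fixes B :: "word \<Rightarrow> word \<Rightarrow> int"
  assumes grading: "\<And>w0 w1. (deg_n w0, deg_e w0) \<noteq> (deg_n w1, deg_e w1) \<Longrightarrow> B w0 w1 = 0"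
    and adj_x: "\<And>w0 w1 i. i \<le> ns X w0 \<Longrightarrow>
                 liftB B (ann X i w0) (Some w1) = liftB B (Some w0) (cre X i w1)"
    and adj_y: "\<And>w0 w1 i. i \<le> ns Y w1 \<Longrightarrow>
                 liftB B (Some w0) (ann Y i w1) = liftB B (cre Y i w0) (Some w1)"
    and norm: "B [] [] = 1"
  shows "B = pairing"
proof -
  interpret graded_adjoint_form B
    using assms by unfold_locales
  show ?thesis
    using B_eq_pairing by blast
qed

end
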